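(* Fix any total budget $\mathrm{TB}\in\mathbb N_0$. Every dyadic rational game form $n/2^k$, with $n\in\mathbb Z$ and $k\in\mathbb N$, is a number.
   Context: Game forms are defined recursively: $G=\{G^{\mathcal L}\mid G^{\mathcal R}\}$ with finite sets of Left and Right options, and finite birthday. $0=\{\varnothing\mid\varnothing\}$, $1=\{0\mid\varnothing\}$. Dyadic game forms: $1/2^0=1$, for $k\in\mathbb N$, $1/2^k=\{0\mid 1/2^{k-1}\}$; for $n\in\mathbb N_0$, $n/2^k$ is the disjunctive sum of $n$ copies of $1/2^k$ (with $0/2^k=0$), and $-n/2^k=\overline{n/2^k}$, where the conjugate is $\bar G=\{\overline{G^{\mathcal R}}\mid\overline{G^{\mathcal L}}\}$. The budget set for total budget $\mathrm{TB}$ is $\mathcal B=\{0,\dots,\mathrm{TB},\hat 0,\dots,\widehat{\mathrm{TB}}\}$: state $p$ (resp. $\hat p$) means Left holds $p$ dollars and Right holds $\mathrm{TB}-p$, and Right (resp. Left) holds the tie-breaking marker. Play of $(G,\tilde p)$: at every position (terminal ones included) both players bid simultaneously, Left $\ell\in\{0,\dots,p\}$, Right $r\in\{0,\dots,\mathrm{TB}-p\}$. If Left holds the marker (state $\hat p$): if $\ell>r$ Left moves to $(G^L,\widehat{p-\ell})$, or, including the marker (allowed when $\ell\ge r$), to $(G^L,p-\ell)$; if $\ell=r$ Left wins, the marker passes to Right, play continues at $(G^L,p-\ell)$; if $\ell<r$ Right moves to $(G^R,\widehat{p+r})$. Symmetrically when Right holds the marker (state $p$): if $r>\ell$ Right moves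 to $(G^R,p+r)$ or, including the marker, to $(G^R,\widehat{p+r})$; if $r=\ell$ Right wins, the marker passes to Left, play continues at $(G^R,\widehat{p+r})$; if $r<\ell$ Left moves to $(G^L,p-\ell)$. A player who wins a bid but has no option loses. $o(G,\tilde p)\in\{\mathrm L,\mathrm R\}$ is the winner under optimal play; $\mathrm L>\mathrm R$. Disjunctive sum $G+H=\{G^{\mathcal L}+H,G+H^{\mathcal L}\mid G^{\mathcal R}+H,G+H^{\mathcal R}\}$. $G\ge H$ means $o(G+X,\tilde p)\ge o(H+X,\tilde p)$ for all game forms $X$ and all $\tilde p\in\mathcal B$; $G=H$ means $G\ge H$ and $H\ge G$; $G>H$ means $G\ge H$ and not $H\ge G$. A game is a number if it is equal (as a game) to a game form all of whose options are numbers and with $G^L<G<G^R$ for all Left options $G^L$ and Right options $G^R$; recursively, a game form $G$ is a number if all its options are numbers and $G^L<G<G^R$ for all $G^L\in G^{\mathcal L}$, $G^R\in G^{\mathcal R}$. *)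

theory Defs
  imports "HOL-Library.FSet"
begin

text \<open>A game form is given by finite sets of Left and Right options.
  Finite birthday is automatic for an inductive datatype.\<close>

datatype game = Game (lefts: "game fset") (rights: "game fset")

definition zero_g :: game where
  "zero_g = Game {||} {||}"

definition one_g :: game where
  "one_g = Game {|zero_g|} {||}"

primrec conj_g :: "game \<Rightarrow> game" where
  "conj_g (Game L R) = Game (fimage conj_g R) (fimage conj_g L)"

text \<open>Disjunctive sum.  plus_aux FL FR H computes G + H, where FL / FR are
  the functions (\<lambda>H. G^L + H) for the Left / Right options G^L / G^R of G.\<close>
primrec plus_aux :: "(game \<Rightarrow> game) fset \<Rightarrow> (game \<Rightarrow> game) fset \<Rightarrow> game \<Rightarrow> game" where
  "plus_aux FL FR (Game HL HR) =
     Game (fimage (\<lambda>f. f (Game HL HR)) FL |\<union>| fimage (plus_aux FL FR) HL)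
          (fimage (\<lambda>f. f (Game HL HR)) FR |\<union>| fimage (plus_aux FL FR) HR)"

primrec plus_g :: "game \<Rightarrow> game \<Rightarrow> game" where
  "plus_g (Game GL GR) = plus_aux (fimage plus_g GL) (fimage plus_g GR)"

primrec half_pow :: "nat \<Rightarrow> game" where
  "half_pow 0 = one_g"
| "half_pow (Suc k) = Game {|zero_g|} {|half_pow k|}"

primrec copies :: "nat \<Rightarrow> game \<Rightarrow> game" where
  "copies 0 G = zero_g"
| "copies (Suc n) G = plus_g G (copies n G)"

definition dyadic :: "int \<Rightarrow> nat \<Rightarrow> game" where
  "dyadic n k = (if 0 \<le> n then copies (nat n) (half_pow k)
                 else conj_g (copies (nat (- n)) (half_pow k)))"

text \<open>A budget state is a pair (p, m): Left holds p dollars, Right holds TB - p;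
  m = True means Left holds the tie-breaking marker (state p-hat),
  m = False means Right holds it (state p).
  One bidding round, given the outcome functions FL / FR of the Left / Right
  options (True = Left wins).  The outcome is L iff Left has a bid such that,
  whatever Right bids, Left wins under optimal continuation; the winner of the
  bid chooses the option (and, where allowed, whether to hand over the marker).
  A player who wins a bid but has no option loses.\<close>

fun bid_step :: "nat \<Rightarrow> (nat \<times> bool \<Rightarrow> bool) fset \<Rightarrow> (nat \<times> bool \<Rightarrow> bool) fset
                 \<Rightarrow> nat \<times> bool \<Rightarrow> bool" where
  "bid_step TB FL FR (p, True) =
     (\<exists>l \<le> p. \<forall>r \<le> TB - p.
        (if r < l then (\<exists>f. f |\<in>| FL \<and> (f (p - l, True) \<or> f (p - l, False)))
         else if l = r then (\<exists>f. f |\<in>| FL \<and> f (p - l, False))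
         else (\<forall>f. f |\<in>| FR \<longrightarrow> f (p + r, True))))"
| "bid_step TB FL FR (p, False) =
     (\<exists>l \<le> p. \<forall>r \<le> TB - p.
        (if l < r then (\<forall>f. f |\<in>| FR \<longrightarrow> (f (p + r, False) \<and> f (p + r, True)))
         else if r = l then (\<forall>f. f |\<in>| FR \<longrightarrow> f (p + r, True))
         else (\<exists>f. f |\<in>| FL \<and> f (p - l, False))))"

primrec outcome :: "nat \<Rightarrow> game \<Rightarrow> nat \<times> bool \<Rightarrow> bool" where
  "outcome TB (Game L R) = bid_step TB (fimage (outcome TB) L) (fimage (outcome TB) R)"

definition game_ge :: "nat \<Rightarrow> game \<Rightarrow> game \<Rightarrow> bool" where
  "game_ge TB G H = (\<forall>X p m. p \<le> TB \<longrightarrow>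
      outcome TB (plus_g H X) (p, m) \<longrightarrow> outcome TB (plus_g G X) (p, m))"

definition game_eq :: "nat \<Rightarrow> game \<Rightarrow> game \<Rightarrow> bool" where
  "game_eq TB G H = (game_ge TB G H \<and> game_ge TB H G)"

definition game_gt :: "nat \<Rightarrow> game \<Rightarrow> game \<Rightarrow> bool" where
  "game_gt TB G H = (game_ge TB G H \<and> \<not> game_ge TB H G)"

inductive is_number :: "nat \<Rightarrow> game \<Rightarrow> bool" for TB :: nat where
  "game_eq TB G H \<Longrightarrow>
   (\<forall>X. X |\<in>| lefts H \<longrightarrow> is_number TB X) \<Longrightarrow>
   (\<forall>X. X |\<in>| rights H \<longrightarrow> is_number TB X) \<Longrightarrow>
   (\<forall>X. X |\<in>| lefts H \<longrightarrow> game_gt TB H X) \<Longrightarrow>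
   (\<forall>X. X |\<in>| rights H \<longrightarrow> game_gt TB X H) \<Longrightarrow>
   is_number TB G"

end

theory Submission
  imports Defs Complex_Main
begin

(* The game n/2^k is a sum of tokens 1/2^j or -1/2^j, and so is every option of such a sum.
   The outcome of a token sum from any budget state is that of a number: Left wins iff its
   dyadic value v is positive, or v = 0 and Right holds the tie-breaking marker.  By induction,
   since Left options lower v, Right options raise it, and a positive sum has a Left option of
   non-negative value (move in a token of finest denomination).

   Comparability with the options must hold in every context X.  Adding 1/2^j never hurts Left
   and is even worth handing Left the marker: Left copies its strategy in the other summand and
   answers Right's moves in the token by induction on j.  Moreover 1/2^j >= 1/2^(j+1), as their
   options dominate each other pairwise.  Strictness is witnessed by adding the conjugate of the
   option and starting at budget 0 with Left holding the marker, where only the values matter. *)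

section \<open>Disjunctive sums and conjugates\<close>

lemma plus_g_Game:
  "plus_g (Game GL GR) (Game HL HR) =
     Game ((\<lambda>g. plus_g g (Game HL HR)) |`| GL |\<union>| plus_g (Game GL GR) |`| HL)
          ((\<lambda>g. plus_g g (Game HL HR)) |`| GR |\<union>| plus_g (Game GL GR) |`| HR)"
proof -
  have "plus_aux (plus_g |`| GL) (plus_g |`| GR) = plus_g (Game GL GR)"
    by simp
  then show ?thesis
    by (simp only: plus_g.simps plus_aux.simps) (simp add: comp_def)
qed

declare plus_g.simps [simp del]

lemma lefts_plus_g: "lefts (plus_g G H) = (\<lambda>g. plus_g g H) |`| lefts G |\<union>| plus_g G |`| lefts H"
  by (cases G; cases H) (simp add: plus_g_Game)

lemma rights_plus_g: "rights (plus_g G H) = (\<lambda>g. plus_g g H) |`| rights G |\<union>| plus_g G |`| rights H"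
  by (cases G; cases H) (simp add: plus_g_Game)

lemma game_eqI: "lefts G = lefts H \<Longrightarrow> rights G = rights H \<Longrightarrow> G = H"
  by (cases G; cases H) auto

lemma lefts_zero_g [simp]: "lefts zero_g = {||}"
  and rights_zero_g [simp]: "rights zero_g = {||}"
  by (simp_all add: zero_g_def)

lemma plus_g_zero_left [simp]: "plus_g zero_g G = G"
proof (induction G)
  case (Game GL GR)
  then show ?case
    by (intro game_eqI) (simp_all add: lefts_plus_g rights_plus_g fset.map_ident_strong)
qed

lemma plus_g_commute: "plus_g G H = plus_g H G"
proof (induction G arbitrary: H)
  case (Game GL GR)
  note IH_G = Game
  show ?case
  proof (induction H)
    case (Game HL HR)
    have "(\<lambda>g. plus_g g (Game HL HR)) |`| GL = plus_g (Game HL HR) |`| GL"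
      "(\<lambda>g. plus_g g (Game HL HR)) |`| GR = plus_g (Game HL HR) |`| GR"
      by (rule fset.map_cong0, rule IH_G, simp)+
    moreover have "plus_g (Game GL GR) |`| HL = (\<lambda>h. plus_g h (Game GL GR)) |`| HL"
      "plus_g (Game GL GR) |`| HR = (\<lambda>h. plus_g h (Game GL GR)) |`| HR"
      by (rule fset.map_cong0, rule Game, simp)+
    ultimately show ?case
      by (intro game_eqI) (simp_all add: lefts_plus_g rights_plus_g funion_commute)
  qed
qed

lemma plus_g_assoc: "plus_g (plus_g G H) K = plus_g G (plus_g H K)"
proof (induction G arbitrary: H K)
  case (Game GL GR)
  note IH_G = Game
  show ?case
  proof (induction H arbitrary: K)
    case (Game HL HR)
    note IH_H = Game
    show ?case
    proof (induction K)
      case (Game KL KR)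
      then show ?case
        by (intro game_eqI)
          (simp_all add: lefts_plus_g rights_plus_g IH_G IH_H fimage_funion fimage_fimage
            funion_assoc cong: fset.map_cong_simp)
    qed
  qed
qed

lemma plus_g_left_commute: "plus_g G (plus_g H K) = plus_g H (plus_g G K)"
  by (metis plus_g_assoc plus_g_commute)

lemma lefts_conj_g: "lefts (conj_g G) = conj_g |`| rights G"
  and rights_conj_g: "rights (conj_g G) = conj_g |`| lefts G"
  by (cases G; simp)+

lemma conj_g_conj_g [simp]: "conj_g (conj_g G) = G"
  by (induction G) (simp add: fimage_fimage fset.map_ident_strong)

lemma conj_g_eq_iff [simp]: "conj_g G = conj_g H \<longleftrightarrow> G = H"
  by (metis conj_g_conj_g)

lemma conj_g_plus_g: "conj_g (plus_g G H) = plus_g (conj_g G) (conj_g H)"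
proof (induction G arbitrary: H)
  case (Game GL GR)
  note IH_G = Game
  show ?case
  proof (induction H)
    case (Game HL HR)
    then show ?case
      by (intro game_eqI)
        (simp_all add: lefts_plus_g rights_plus_g lefts_conj_g rights_conj_g IH_G
          fimage_funion fimage_fimage cong: fset.map_cong_simp)
  qed
qed

lemma conj_g_zero_g [simp]: "conj_g zero_g = zero_g"
  by (simp add: zero_g_def)

lemma mem_lefts_plus_g:
  "X |\<in>| lefts (plus_g G H) \<longleftrightarrow>
     (\<exists>G'. G' |\<in>| lefts G \<and> X = plus_g G' H) \<or> (\<exists>H'. H' |\<in>| lefts H \<and> X = plus_g G H')"
  by (auto simp: lefts_plus_g)

lemma mem_rights_plus_g:
  "X |\<in>| rights (plus_g G H) \<longleftrightarrow>
     (\<exists>G'. G' |\<in>| rights G \<and> X = plus_g G' H) \<or> (\<exists>H'. H' |\<in>| rights H \<and> X = plus_g G H')"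
  by (auto simp: rights_plus_g)

section \<open>Outcomes of bidding play\<close>

lemma outcome_True_iff:
  "outcome TB X (p, True) \<longleftrightarrow> (\<exists>l\<le>p.
     (0 < l \<longrightarrow> (\<exists>Y. Y |\<in>| lefts X \<and> (outcome TB Y (p - l, True) \<or> outcome TB Y (p - l, False)))) \<and>
     (l \<le> TB - p \<longrightarrow> (\<exists>Y. Y |\<in>| lefts X \<and> outcome TB Y (p - l, False))) \<and>
     (\<forall>r Y. l < r \<longrightarrow> r \<le> TB - p \<longrightarrow> Y |\<in>| rights X \<longrightarrow> outcome TB Y (p + r, True)))"
proof (cases X)
  case (Game L R)
  have "outcome TB X (p, True) \<longleftrightarrow> (\<exists>l\<le>p. \<forall>r\<le>TB - p.
     (r < l \<longrightarrow> (\<exists>Y. Y |\<in>| L \<and> (outcome TB Y (p - l, True) \<or> outcome TB Y (p - l, False)))) \<and>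
     (r = l \<longrightarrow> (\<exists>Y. Y |\<in>| L \<and> outcome TB Y (p - l, False))) \<and>
     (l < r \<longrightarrow> (\<forall>Y. Y |\<in>| R \<longrightarrow> outcome TB Y (p + r, True))))"
    unfolding Game outcome.simps bid_step.simps
    by (intro ex_cong1 conj_cong all_cong1 imp_cong refl) (auto simp: fimage_iff)
  then show ?thesis
    unfolding Game game.sel by (auto dest: spec[of _ 0])
qed

lemma outcome_False_iff:
  "outcome TB X (p, False) \<longleftrightarrow> (\<exists>l\<le>p.
     (0 < l \<longrightarrow> (\<exists>Y. Y |\<in>| lefts X \<and> outcome TB Y (p - l, False))) \<and>
     (l \<le> TB - p \<longrightarrow> (\<forall>Y. Y |\<in>| rights X \<longrightarrow> outcome TB Y (p + l, True))) \<and>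
     (\<forall>r Y. l < r \<longrightarrow> r \<le> TB - p \<longrightarrow> Y |\<in>| rights X \<longrightarrow>
        outcome TB Y (p + r, False) \<and> outcome TB Y (p + r, True)))"
proof (cases X)
  case (Game L R)
  have "outcome TB X (p, False) \<longleftrightarrow> (\<exists>l\<le>p. \<forall>r\<le>TB - p.
     (r < l \<longrightarrow> (\<exists>Y. Y |\<in>| L \<and> outcome TB Y (p - l, False))) \<and>
     (r = l \<longrightarrow> (\<forall>Y. Y |\<in>| R \<longrightarrow> outcome TB Y (p + r, True))) \<and>
     (l < r \<longrightarrow> (\<forall>Y. Y |\<in>| R \<longrightarrow> outcome TB Y (p + r, False) \<and> outcome TB Y (p + r, True))))"
    unfolding Game outcome.simps bid_step.simps
    by (intro ex_cong1 conj_cong all_cong1 refl) (auto simp: fimage_iff)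
  then show ?thesis
    unfolding Game game.sel by (auto dest: spec[of _ 0])
qed

declare outcome.simps [simp del]

lemma outcome_TrueI:
  assumes "l \<le> p"
    and "0 < l \<Longrightarrow> \<exists>Y. Y |\<in>| lefts X \<and> (outcome TB Y (p - l, True) \<or> outcome TB Y (p - l, False))"
    and "l \<le> TB - p \<Longrightarrow> \<exists>Y. Y |\<in>| lefts X \<and> outcome TB Y (p - l, False)"
    and "\<And>r Y. l < r \<Longrightarrow> r \<le> TB - p \<Longrightarrow> Y |\<in>| rights X \<Longrightarrow> outcome TB Y (p + r, True)"
  shows "outcome TB X (p, True)"
  using assms unfolding outcome_True_iff[of TB X p] by auto

lemma outcome_TrueE:
  assumes "outcome TB X (p, True)"
  obtains l where "l \<le> p"
    and "0 < l \<Longrightarrow> \<exists>Y. Y |\<in>| lefts X \<and> (outcome TB Y (p - l, True) \<or> outcome TB Y (p - l, False))"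
    and "l \<le> TB - p \<Longrightarrow> \<exists>Y. Y |\<in>| lefts X \<and> outcome TB Y (p - l, False)"
    and "\<And>r Y. l < r \<Longrightarrow> r \<le> TB - p \<Longrightarrow> Y |\<in>| rights X \<Longrightarrow> outcome TB Y (p + r, True)"
  using assms unfolding outcome_True_iff[of TB X p] by blast

lemma outcome_FalseI:
  assumes "l \<le> p"
    and "0 < l \<Longrightarrow> \<exists>Y. Y |\<in>| lefts X \<and> outcome TB Y (p - l, False)"
    and "\<And>Y. l \<le> TB - p \<Longrightarrow> Y |\<in>| rights X \<Longrightarrow> outcome TB Y (p + l, True)"
    and "\<And>r Y. l < r \<Longrightarrow> r \<le> TB - p \<Longrightarrow> Y |\<in>| rights X \<Longrightarrow>
           outcome TB Y (p + r, False) \<and> outcome TB Y (p + r, True)"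
  shows "outcome TB X (p, False)"
  using assms unfolding outcome_False_iff[of TB X p] by auto

lemma outcome_FalseE:
  assumes "outcome TB X (p, False)"
  obtains l where "l \<le> p"
    and "0 < l \<Longrightarrow> \<exists>Y. Y |\<in>| lefts X \<and> outcome TB Y (p - l, False)"
    and "\<And>Y. l \<le> TB - p \<Longrightarrow> Y |\<in>| rights X \<Longrightarrow> outcome TB Y (p + l, True)"
    and "\<And>r Y. l < r \<Longrightarrow> r \<le> TB - p \<Longrightarrow> Y |\<in>| rights X \<Longrightarrow>
           outcome TB Y (p + r, False) \<and> outcome TB Y (p + r, True)"
  using assms unfolding outcome_False_iff[of TB X p] by blast

lemma outcome_True_imp_left_option:
  assumes "outcome TB X (p, True)"
  shows "\<exists>Y s. Y |\<in>| lefts X \<and> outcome TB Y s"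
proof -
  obtain l where
    "0 < l \<longrightarrow> (\<exists>Y. Y |\<in>| lefts X \<and> (outcome TB Y (p - l, True) \<or> outcome TB Y (p - l, False)))"
    and "l \<le> TB - p \<longrightarrow> (\<exists>Y. Y |\<in>| lefts X \<and> outcome TB Y (p - l, False))"
    using assms unfolding outcome_True_iff[of TB X p] by blast
  then show ?thesis
    by (cases "l = 0") auto
qed

lemma outcome_False_imp_left_option_or_rights:
  assumes "outcome TB X (p, False)"
  shows "(\<exists>Y s. Y |\<in>| lefts X \<and> outcome TB Y s) \<or> (\<forall>Y. Y |\<in>| rights X \<longrightarrow> outcome TB Y (p, True))"
proof -
  obtain l where
    "0 < l \<longrightarrow> (\<exists>Y. Y |\<in>| lefts X \<and> outcome TB Y (p - l, False))"
    and "l \<le> TB - p \<longrightarrow> (\<forall>Y. Y |\<in>| rights X \<longrightarrow> outcome TB Y (p + l, True))"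
    using assms unfolding outcome_False_iff[of TB X p] by blast
  then show ?thesis
    by (cases "l = 0") auto
qed

lemma outcome_True_zero_bidI:
  assumes "Y |\<in>| lefts X" "outcome TB Y (p, False)"
    and "\<And>Y' s. Y' |\<in>| rights X \<Longrightarrow> outcome TB Y' s"
  shows "outcome TB X (p, True)"
  by (rule outcome_TrueI[of 0]) (use assms in auto)

lemma outcome_False_zero_bidI:
  assumes "\<And>Y s. Y |\<in>| rights X \<Longrightarrow> outcome TB Y s"
  shows "outcome TB X (p, False)"
  by (rule outcome_FalseI[of 0]) (use assms in auto)

(* Left wins B with d extra dollars by copying a winning strategy for A.  The side conditions
   on (p, m') describe the states reachable from (q, m) by one Left, resp. one Right, move. *)
lemma outcome_copy_strategy:
  assumes A: "outcome TB A (q, m)"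
    and lefts: "\<And>X p m'. X |\<in>| lefts A \<Longrightarrow> p \<le> q \<Longrightarrow> (m' \<longrightarrow> m) \<Longrightarrow> outcome TB X (p, m') \<Longrightarrow>
                  \<exists>X'. X' |\<in>| lefts B \<and> outcome TB X' (p + d, m')"
    and rights: "\<And>X' p m'. X' |\<in>| rights B \<Longrightarrow> q \<le> p \<Longrightarrow> (m \<longrightarrow> m') \<Longrightarrow>
                  (\<And>X. X |\<in>| rights A \<Longrightarrow> outcome TB X (p, m')) \<Longrightarrow> outcome TB X' (p + d, m')"
  shows "outcome TB B (q + d, m)"
proof (cases m)
  case True
  from A \<open>m\<close> have "outcome TB A (q, True)"
    by simp
  then obtain l where "l \<le> q"
    and pos: "0 < l \<Longrightarrow> \<exists>X. X |\<in>| lefts A \<and> (outcome TB X (q - l, True) \<or> outcome TB X (q - l, False))"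
    and tie: "l \<le> TB - q \<Longrightarrow> \<exists>X. X |\<in>| lefts A \<and> outcome TB X (q - l, False)"
    and rts: "\<And>r X. l < r \<Longrightarrow> r \<le> TB - q \<Longrightarrow> X |\<in>| rights A \<Longrightarrow> outcome TB X (q + r, True)"
    by (elim outcome_TrueE) blast
  have shift: "q - l + d = q + d - l"
    using \<open>l \<le> q\<close> by simp
  have "outcome TB B (q + d, True)"
  proof (rule outcome_TrueI)
    show "l \<le> q + d"
      using \<open>l \<le> q\<close> by simp
  next
    assume "0 < l"
    then obtain X m' where "X |\<in>| lefts A" "outcome TB X (q - l, m')"
      using pos by blast
    then obtain X' where "X' |\<in>| lefts B" "outcome TB X' (q + d - l, m')"
      using lefts[of X "q - l" m'] True shift by auto
    then show "\<exists>X'. X' |\<in>| lefts B \<and> (outcome TB X' (q + d - l, True) \<or> outcome TB X' (q + d - l, False))"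
      by (cases m') auto
  next
    assume "l \<le> TB - (q + d)"
    then obtain X where "X |\<in>| lefts A" "outcome TB X (q - l, False)"
      using tie by fastforce
    then show "\<exists>X'. X' |\<in>| lefts B \<and> outcome TB X' (q + d - l, False)"
      using lefts[of X "q - l" False] shift by auto
  next
    fix r X' assume "l < r" "r \<le> TB - (q + d)" "X' |\<in>| rights B"
    then show "outcome TB X' (q + d + r, True)"
      using rights[of X' "q + r" True] rts by (simp add: add_ac)
  qed
  with True show ?thesis
    by simp
next
  case False
  from A \<open>\<not> m\<close> have "outcome TB A (q, False)"
    by simp
  then obtain l where "l \<le> q"
    and pos: "0 < l \<Longrightarrow> \<exists>X. X |\<in>| lefts A \<and> outcome TB X (q - l, False)"
    and tie: "\<And>X. l \<le> TB - q \<Longrightarrow> X |\<in>| rights A \<Longrightarrow> outcome TB X (q + l, True)"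
    and rts: "\<And>r X. l < r \<Longrightarrow> r \<le> TB - q \<Longrightarrow> X |\<in>| rights A \<Longrightarrow>
                outcome TB X (q + r, False) \<and> outcome TB X (q + r, True)"
    by (elim outcome_FalseE) blast
  have shift: "q - l + d = q + d - l"
    using \<open>l \<le> q\<close> by simp
  have "outcome TB B (q + d, False)"
  proof (rule outcome_FalseI)
    show "l \<le> q + d"
      using \<open>l \<le> q\<close> by simp
  next
    assume "0 < l"
    then obtain X where "X |\<in>| lefts A" "outcome TB X (q - l, False)"
      using pos by blast
    then show "\<exists>X'. X' |\<in>| lefts B \<and> outcome TB X' (q + d - l, False)"
      using lefts[of X "q - l" False] shift by auto
  next
    fix X' assume "l \<le> TB - (q + d)" "X' |\<in>| rights B"
    then show "outcome TB X' (q + d + l, True)"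
      using rights[of X' "q + l" True] tie by (simp add: add_ac)
  next
    fix r X' assume r: "l < r" "r \<le> TB - (q + d)" and X': "X' |\<in>| rights B"
    have "outcome TB X' (q + r + d, m')" for m'
      using rights[OF X', of "q + r" m'] rts[OF r(1)] r(2) \<open>\<not> m\<close> by (cases m') auto
    then show "outcome TB X' (q + d + r, False) \<and> outcome TB X' (q + d + r, True)"
      by (simp add: add_ac)
  qed
  with False show ?thesis
    by simp
qed

lemma outcome_mono_budget:
  assumes "outcome TB Y (q, m)" "q \<le> q'"
  shows "outcome TB Y (q', m)"
proof -
  have "outcome TB Y (q + d, m)" if "outcome TB Y (q, m)" for q d
    using that
  proof (induction Y arbitrary: q m)
    case (Game L R)
    show ?case
      by (rule outcome_copy_strategy[OF Game.prems]) (use Game.IH in auto)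
  qed
  then show ?thesis
    using assms le_Suc_ex by blast
qed

lemma outcome_transfer:
  assumes "outcome TB A (q, m)"
    and "\<And>X p m'. X |\<in>| lefts A \<Longrightarrow> p \<le> q \<Longrightarrow> (m' \<longrightarrow> m) \<Longrightarrow> outcome TB X (p, m') \<Longrightarrow>
           \<exists>X'. X' |\<in>| lefts B \<and> outcome TB X' (p, m')"
    and "\<And>X' p m'. X' |\<in>| rights B \<Longrightarrow> q \<le> p \<Longrightarrow> (m \<longrightarrow> m') \<Longrightarrow>
           (\<And>X. X |\<in>| rights A \<Longrightarrow> outcome TB X (p, m')) \<Longrightarrow> outcome TB X' (p, m')"
  shows "outcome TB B (q, m)"
  using outcome_copy_strategy[of TB A q m B 0] assms by simp

definition outcome_by_sign :: "nat \<Rightarrow> 'a::{linorder,zero} \<Rightarrow> game \<Rightarrow> bool" where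
  "outcome_by_sign TB v G \<longleftrightarrow> (\<forall>p m. outcome TB G (p, m) \<longleftrightarrow> 0 < v \<or> (v = 0 \<and> \<not> m))"

lemma outcome_by_signI:
  fixes v :: "'a::{linorder,zero}"
  assumes lefts: "\<And>X. X |\<in>| lefts G \<Longrightarrow> \<exists>w<v. outcome_by_sign TB w X"
    and rights: "\<And>X. X |\<in>| rights G \<Longrightarrow> \<exists>w>v. outcome_by_sign TB w X"
    and left_reply: "0 < v \<Longrightarrow> \<exists>X w. X |\<in>| lefts G \<and> 0 \<le> w \<and> outcome_by_sign TB w X"
    and right_reply: "v < 0 \<Longrightarrow> \<exists>X w. X |\<in>| rights G \<and> w \<le> 0 \<and> outcome_by_sign TB w X"
  shows "outcome_by_sign TB v G"
proof -
  have lefts_lose: "\<not> outcome TB X s" if "v \<le> 0" "X |\<in>| lefts G" for X s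
    using lefts[OF that(2)] that(1) unfolding outcome_by_sign_def by (cases s) force
  have rights_win: "outcome TB X s" if "0 \<le> v" "X |\<in>| rights G" for X s
    using rights[OF that(2)] that(1) unfolding outcome_by_sign_def by (cases s) force
  have marker_lose: "\<not> outcome TB G (p, True)" if "v \<le> 0" for p
    using outcome_True_imp_left_option lefts_lose[OF that] by blast
  have "outcome TB G (p, m) \<longleftrightarrow> 0 < v \<or> (v = 0 \<and> \<not> m)" for p m
  proof (cases v "0::'a" rule: linorder_cases)
    case greater
    then obtain X where "X |\<in>| lefts G" "outcome TB X (p, False)"
      using left_reply unfolding outcome_by_sign_def by force
    moreover have "outcome TB Y s" if "Y |\<in>| rights G" for Y s
      using rights_win greater that by simp
    ultimately have "outcome TB G (p, True)" "outcome TB G (p, False)"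
      by (blast intro: outcome_True_zero_bidI outcome_False_zero_bidI)+
    with greater show ?thesis
      by (cases m) simp_all
  next
    case less
    then have "v \<le> 0" "v \<noteq> 0" "\<not> 0 < v"
      by auto
    obtain X where "X |\<in>| rights G" "\<not> outcome TB X (p, True)"
      using right_reply less unfolding outcome_by_sign_def by force
    then have "\<not> outcome TB G (p, False)"
      using outcome_False_imp_left_option_or_rights lefts_lose \<open>v \<le> 0\<close> by blast
    with marker_lose \<open>v \<le> 0\<close> \<open>v \<noteq> 0\<close> \<open>\<not> 0 < v\<close> show ?thesis
      by (cases m) simp_all
  next
    case equal
    have "outcome TB G (p, False)"
      using rights_win equal by (blast intro: outcome_False_zero_bidI)
    with marker_lose equal show ?thesis
      by (cases m) simp_all
  qed
  then show ?thesis
    unfolding outcome_by_sign_def by blast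
qed

section \<open>Comparing sums in every context\<close>

lemma outcome_plus_mono_optionwise:
  assumes lefts: "\<And>H'. H' |\<in>| lefts H \<Longrightarrow> \<exists>G'. G' |\<in>| lefts G \<and>
      (\<forall>Y q m. outcome TB (plus_g H' Y) (q, m) \<longrightarrow> outcome TB (plus_g G' Y) (q, m))"
    and rights: "\<And>G'. G' |\<in>| rights G \<Longrightarrow> \<exists>H'. H' |\<in>| rights H \<and>
      (\<forall>Y q m. outcome TB (plus_g H' Y) (q, m) \<longrightarrow> outcome TB (plus_g G' Y) (q, m))"
  shows "outcome TB (plus_g H Y) (q, m) \<Longrightarrow> outcome TB (plus_g G Y) (q, m)"
proof (induction Y arbitrary: q m)
  case (Game YL YR)
  show ?case
  proof (rule outcome_transfer[OF Game.prems])
    fix X p m' assume "X |\<in>| lefts (plus_g H (Game YL YR))" and win: "outcome TB X (p, m')"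
    then consider (H) H' where "H' |\<in>| lefts H" "X = plus_g H' (Game YL YR)"
      | (Y) Y' where "Y' |\<in>| YL" "X = plus_g H Y'"
      by (auto simp: mem_lefts_plus_g)
    then show "\<exists>X'. X' |\<in>| lefts (plus_g G (Game YL YR)) \<and> outcome TB X' (p, m')"
    proof cases
      case H
      then obtain G' where "G' |\<in>| lefts G" "outcome TB (plus_g G' (Game YL YR)) (p, m')"
        using lefts win by blast
      then show ?thesis
        by (auto simp: mem_lefts_plus_g)
    next
      case Y
      then show ?thesis
        using Game.IH(1) win by (auto simp: mem_lefts_plus_g)
    qed
  next
    fix X' p m'
    assume "X' |\<in>| rights (plus_g G (Game YL YR))"
      and wins: "\<And>X. X |\<in>| rights (plus_g H (Game YL YR)) \<Longrightarrow> outcome TB X (p, m')"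
    then consider (G) G' where "G' |\<in>| rights G" "X' = plus_g G' (Game YL YR)"
      | (Y) Y' where "Y' |\<in>| YR" "X' = plus_g G Y'"
      by (auto simp: mem_rights_plus_g)
    then show "outcome TB X' (p, m')"
    proof cases
      case G
      then obtain H' where "H' |\<in>| rights H"
        "outcome TB (plus_g H' (Game YL YR)) (p, m') \<longrightarrow> outcome TB X' (p, m')"
        using rights by blast
      then show ?thesis
        using wins by (auto simp: mem_rights_plus_g)
    next
      case Y
      then have "outcome TB (plus_g H Y') (p, m')"
        using wins[of "plus_g H Y'"] by (auto simp: mem_rights_plus_g)
      then show ?thesis
        using Game.IH(2) Y by simp
    qed
  qed
qed

inductive dominates :: "game \<Rightarrow> game \<Rightarrow> bool" where
  dominatesI:
    "(\<forall>H'. H' |\<in>| lefts H \<longrightarrow> (\<exists>G'. G' |\<in>| lefts G \<and> dominates G' H')) \<Longrightarrow>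
     (\<forall>G'. G' |\<in>| rights G \<longrightarrow> (\<exists>H'. H' |\<in>| rights H \<and> dominates G' H')) \<Longrightarrow>
     dominates G H"

lemma dominates_outcome_plus:
  assumes "dominates G H"
  shows "outcome TB (plus_g H Y) (q, m) \<Longrightarrow> outcome TB (plus_g G Y) (q, m)"
proof -
  from assms have "\<forall>Y q m. outcome TB (plus_g H Y) (q, m) \<longrightarrow> outcome TB (plus_g G Y) (q, m)"
  proof induction
    case (dominatesI H G)
    have "\<exists>G'. G' |\<in>| lefts G \<and>
        (\<forall>Y q m. outcome TB (plus_g H' Y) (q, m) \<longrightarrow> outcome TB (plus_g G' Y) (q, m))"
      if "H' |\<in>| lefts H" for H'
      using dominatesI.IH(1) that by blast
    moreover have "\<exists>H'. H' |\<in>| rights H \<and>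
        (\<forall>Y q m. outcome TB (plus_g H' Y) (q, m) \<longrightarrow> outcome TB (plus_g G' Y) (q, m))"
      if "G' |\<in>| rights G" for G'
      using dominatesI.IH(2) that by blast
    ultimately show ?case
      using outcome_plus_mono_optionwise by blast
  qed
  then show "outcome TB (plus_g H Y) (q, m) \<Longrightarrow> outcome TB (plus_g G Y) (q, m)"
    by blast
qed

(* Z never hurts Left, and it is worth at least handing the tie-breaking marker to Left;
   right_advantage is the mirror image for Right. *)
definition left_advantage :: "nat \<Rightarrow> game \<Rightarrow> bool" where
  "left_advantage TB Z \<longleftrightarrow>
     (\<forall>Y q m. outcome TB Y (q, m) \<longrightarrow> outcome TB (plus_g Z Y) (q, m)) \<and>
     (\<forall>Y q q'. q \<le> q' \<longrightarrow> outcome TB Y (q, False) \<longrightarrow> outcome TB (plus_g Z Y) (q', True))"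

definition right_advantage :: "nat \<Rightarrow> game \<Rightarrow> bool" where
  "right_advantage TB Z \<longleftrightarrow>
     (\<forall>Y q m. outcome TB (plus_g Z Y) (q, m) \<longrightarrow> outcome TB Y (q, m)) \<and>
     (\<forall>Y q q'. q' \<le> q \<longrightarrow> outcome TB (plus_g Z Y) (q', False) \<longrightarrow> outcome TB Y (q, True))"

lemma outcome_plus_left_mono:
  assumes adv: "\<And>Z'. Z' |\<in>| rights Z \<Longrightarrow> left_advantage TB Z'"
  shows "outcome TB Y (q, m) \<Longrightarrow> outcome TB (plus_g Z Y) (q, m)"
proof (induction Y arbitrary: q m)
  case (Game L R)
  show ?case
  proof (rule outcome_transfer[OF Game.prems])
    fix X p m' assume "X |\<in>| lefts (Game L R)" "outcome TB X (p, m')"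
    then show "\<exists>X'. X' |\<in>| lefts (plus_g Z (Game L R)) \<and> outcome TB X' (p, m')"
      using Game.IH(1) by (auto simp: mem_lefts_plus_g)
  next
    fix X' p m'
    assume X': "X' |\<in>| rights (plus_g Z (Game L R))" and "q \<le> p" "m \<longrightarrow> m'"
      and wins: "\<And>X. X |\<in>| rights (Game L R) \<Longrightarrow> outcome TB X (p, m')"
    from X' consider (Z) Z' where "Z' |\<in>| rights Z" "X' = plus_g Z' (Game L R)"
      | (Y) Y' where "Y' |\<in>| R" "X' = plus_g Z Y'"
      by (auto simp: mem_rights_plus_g)
    then show "outcome TB X' (p, m')"
    proof cases
      case Z
      have "outcome TB (Game L R) (p, m)"
        using Game.prems \<open>q \<le> p\<close> by (rule outcome_mono_budget)
      then show ?thesis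
        using adv[OF Z(1)] Game.prems \<open>q \<le> p\<close> \<open>m \<longrightarrow> m'\<close> Z(2)
        unfolding left_advantage_def by (cases m; cases m') auto
    next
      case Y
      then show ?thesis
        using Game.IH(2) wins by simp
    qed
  qed
qed

lemma outcome_plus_left_marker:
  assumes zero: "zero_g |\<in>| lefts Z"
    and adv: "\<And>Z'. Z' |\<in>| rights Z \<Longrightarrow> left_advantage TB Z'"
    and win: "outcome TB Y (q, False)" and "q \<le> q'"
  shows "outcome TB (plus_g Z Y) (q', True)"
proof -
  obtain l where "l \<le> q"
    and pos: "0 < l \<Longrightarrow> \<exists>Y'. Y' |\<in>| lefts Y \<and> outcome TB Y' (q - l, False)"
    and rts: "\<And>r Y'. l < r \<Longrightarrow> r \<le> TB - q \<Longrightarrow> Y' |\<in>| rights Y \<Longrightarrow>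
                outcome TB Y' (q + r, False) \<and> outcome TB Y' (q + r, True)"
    using win by (elim outcome_FalseE) blast
  have left_move: "\<exists>X. X |\<in>| lefts (plus_g Z Y) \<and> outcome TB X (q' - l, False)" if "0 < l"
  proof -
    from pos[OF that] obtain Y' where "Y' |\<in>| lefts Y" "outcome TB Y' (q - l, False)"
      by blast
    moreover from this have "outcome TB Y' (q' - l, False)"
      using \<open>q \<le> q'\<close> outcome_mono_budget diff_le_mono by blast
    ultimately show ?thesis
      using outcome_plus_left_mono[OF adv] by (auto simp: mem_lefts_plus_g)
  qed
  show ?thesis
  proof (rule outcome_TrueI)
    show "l \<le> q'"
      using \<open>l \<le> q\<close> \<open>q \<le> q'\<close> by simp
  next
    show "\<exists>X. X |\<in>| lefts (plus_g Z (Y)) \<and> (outcome TB X (q' - l, True) \<or> outcome TB X (q' - l, False))"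
      if "0 < l"
      using left_move[OF that] by blast
  next
    show "\<exists>X. X |\<in>| lefts (plus_g Z Y) \<and> outcome TB X (q' - l, False)"
    proof (cases "l = 0")
      case True
      have "Y |\<in>| lefts (plus_g Z Y)"
        using zero by (auto simp: mem_lefts_plus_g)
      moreover have "outcome TB Y (q', False)"
        using win \<open>q \<le> q'\<close> by (rule outcome_mono_budget)
      ultimately show ?thesis
        using True by auto
    next
      case False
      then show ?thesis
        using left_move by simp
    qed
  next
    fix r X assume "l < r" "r \<le> TB - q'" "X |\<in>| rights (plus_g Z Y)"
    then consider (Z) Z' where "Z' |\<in>| rights Z" "X = plus_g Z' Y"
      | (Y) Y' where "Y' |\<in>| rights Y" "X = plus_g Z Y'"
      by (auto simp: mem_rights_plus_g)
    then show "outcome TB X (q' + r, True)"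
    proof cases
      case Z
      have "q \<le> q' + r"
        using \<open>q \<le> q'\<close> by simp
      then show ?thesis
        using adv[OF Z(1)] win Z(2) unfolding left_advantage_def by blast
    next
      case Y
      have "outcome TB Y' (q + r, True)"
        using rts[OF \<open>l < r\<close> _ Y(1)] \<open>r \<le> TB - q'\<close> \<open>q \<le> q'\<close> by simp
      then have "outcome TB Y' (q' + r, True)"
        using \<open>q \<le> q'\<close> outcome_mono_budget add_le_mono1 by blast
      then show ?thesis
        using outcome_plus_left_mono[OF adv] Y(2) by simp
    qed
  qed
qed

lemma left_advantageI:
  assumes "zero_g |\<in>| lefts Z" "\<And>Z'. Z' |\<in>| rights Z \<Longrightarrow> left_advantage TB Z'"
  shows "left_advantage TB Z"
  using outcome_plus_left_mono[OF assms(2)] outcome_plus_left_marker[OF assms]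
  unfolding left_advantage_def by blast

lemma outcome_plus_right_mono:
  assumes adv: "\<And>Z'. Z' |\<in>| lefts Z \<Longrightarrow> right_advantage TB Z'"
  shows "outcome TB (plus_g Z Y) (q, m) \<Longrightarrow> outcome TB Y (q, m)"
proof (induction Y arbitrary: q m)
  case (Game L R)
  show ?case
  proof (rule ccontr)
    assume lose: "\<not> outcome TB (Game L R) (q, m)"
    have "outcome TB (Game L R) (q, m)"
    proof (rule outcome_transfer[OF Game.prems])
      fix X p m'
      assume X: "X |\<in>| lefts (plus_g Z (Game L R))" and "p \<le> q" "m' \<longrightarrow> m"
        and win: "outcome TB X (p, m')"
      from X consider (Z) Z' where "Z' |\<in>| lefts Z" "X = plus_g Z' (Game L R)"
        | (Y) Y' where "Y' |\<in>| L" "X = plus_g Z Y'"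
        by (auto simp: mem_lefts_plus_g)
      then show "\<exists>X'. X' |\<in>| lefts (Game L R) \<and> outcome TB X' (p, m')"
      proof cases
        case Z
        \<comment> \<open>Left's move in Z would already win Y, contradicting lose.\<close>
        have "outcome TB (Game L R) (q, m)"
        proof (cases "m' = m")
          case True
          then have "outcome TB (Game L R) (p, m)"
            using adv[OF Z(1)] win Z(2) unfolding right_advantage_def by blast
          then show ?thesis
            using \<open>p \<le> q\<close> by (rule outcome_mono_budget)
        next
          case False
          with \<open>m' \<longrightarrow> m\<close> have "m" "\<not> m'"
            by auto
          then show ?thesis
            using adv[OF Z(1)] win Z(2) \<open>p \<le> q\<close> unfolding right_advantage_def by auto
        qed
        with lose show ?thesis ..
      next
        case Y
        then show ?thesis
          using Game.IH(1) win by auto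
      qed
    next
      fix X' p m'
      assume "X' |\<in>| rights (Game L R)"
        and wins: "\<And>X. X |\<in>| rights (plus_g Z (Game L R)) \<Longrightarrow> outcome TB X (p, m')"
      then show "outcome TB X' (p, m')"
        using Game.IH(2) by (auto simp: mem_rights_plus_g)
    qed
    with lose show False ..
  qed
qed

lemma outcome_plus_right_left_option:
  assumes adv: "\<And>Z'. Z' |\<in>| lefts Z \<Longrightarrow> right_advantage TB Z'"
    and X: "X |\<in>| lefts (plus_g Z Y)" and win: "outcome TB X (p, False)"
    and "p \<le> p'" "p \<le> q"
  shows "outcome TB Y (q, True) \<or> (\<exists>Y'. Y' |\<in>| lefts Y \<and> outcome TB Y' (p', False))"
proof -
  from X consider (Z) Z' where "Z' |\<in>| lefts Z" "X = plus_g Z' Y"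
    | (Y) Y' where "Y' |\<in>| lefts Y" "X = plus_g Z Y'"
    by (auto simp: mem_lefts_plus_g)
  then show ?thesis
  proof cases
    case Z
    then have "outcome TB Y (q, True)"
      using adv[OF Z(1)] win \<open>p \<le> q\<close> unfolding right_advantage_def by blast
    then show ?thesis ..
  next
    case Y
    then have "outcome TB Y' (p, False)"
      using outcome_plus_right_mono[OF adv] win by blast
    then have "outcome TB Y' (p', False)"
      using \<open>p \<le> p'\<close> by (rule outcome_mono_budget)
    then show ?thesis
      using Y(1) by blast
  qed
qed

lemma outcome_plus_right_marker:
  assumes zero: "zero_g |\<in>| rights Z"
    and adv: "\<And>Z'. Z' |\<in>| lefts Z \<Longrightarrow> right_advantage TB Z'"
    and win: "outcome TB (plus_g Z Y) (q', False)" and "q' \<le> q"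
  shows "outcome TB Y (q, True)"
proof (rule ccontr)
  assume lose: "\<not> outcome TB Y (q, True)"
  obtain l where "l \<le> q'"
    and pos: "0 < l \<Longrightarrow> \<exists>X. X |\<in>| lefts (plus_g Z Y) \<and> outcome TB X (q' - l, False)"
    and tie: "\<And>X. l \<le> TB - q' \<Longrightarrow> X |\<in>| rights (plus_g Z Y) \<Longrightarrow> outcome TB X (q' + l, True)"
    and rts: "\<And>r X. l < r \<Longrightarrow> r \<le> TB - q' \<Longrightarrow> X |\<in>| rights (plus_g Z Y) \<Longrightarrow>
                outcome TB X (q' + r, False) \<and> outcome TB X (q' + r, True)"
    using win by (elim outcome_FalseE) blast
  have left_move: "\<exists>Y'. Y' |\<in>| lefts Y \<and> outcome TB Y' (q - l, False)" if "0 < l"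
  proof -
    from pos[OF that] obtain X where "X |\<in>| lefts (plus_g Z Y)" "outcome TB X (q' - l, False)"
      by blast
    moreover have "q' - l \<le> q - l" "q' - l \<le> q"
      using \<open>q' \<le> q\<close> by simp_all
    ultimately show ?thesis
      using outcome_plus_right_left_option[OF adv] lose by blast
  qed
  have "outcome TB Y (q, True)"
  proof (rule outcome_TrueI)
    show "l \<le> q"
      using \<open>l \<le> q'\<close> \<open>q' \<le> q\<close> by simp
  next
    show "\<exists>Y'. Y' |\<in>| lefts Y \<and> (outcome TB Y' (q - l, True) \<or> outcome TB Y' (q - l, False))"
      if "0 < l"
      using left_move[OF that] by blast
  next
    assume "l \<le> TB - q"
    show "\<exists>Y'. Y' |\<in>| lefts Y \<and> outcome TB Y' (q - l, False)"
    proof (cases "l = 0")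
      case True
      \<comment> \<open>Right wins the tie and may move from Z to 0, which leaves Y with Left holding the marker.\<close>
      have "Y |\<in>| rights (plus_g Z Y)"
        using zero by (auto simp: mem_rights_plus_g)
      then have "outcome TB Y (q', True)"
        using tie \<open>l \<le> TB - q\<close> \<open>q' \<le> q\<close> True by simp
      then have "outcome TB Y (q, True)"
        using \<open>q' \<le> q\<close> by (rule outcome_mono_budget)
      with lose show ?thesis ..
    next
      case False
      then show ?thesis
        using left_move by simp
    qed
  next
    fix r Y' assume "l < r" "r \<le> TB - q" "Y' |\<in>| rights Y"
    moreover have "r \<le> TB - q'"
      using \<open>r \<le> TB - q\<close> \<open>q' \<le> q\<close> by simp
    ultimately have "outcome TB (plus_g Z Y') (q' + r, True)"
      using rts[of r "plus_g Z Y'"] by (auto simp: mem_rights_plus_g)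
    then have "outcome TB Y' (q' + r, True)"
      using outcome_plus_right_mono[OF adv] by blast
    then show "outcome TB Y' (q + r, True)"
      using \<open>q' \<le> q\<close> outcome_mono_budget add_le_mono1 by blast
  qed
  with lose show False ..
qed

lemma right_advantageI:
  assumes "zero_g |\<in>| rights Z" "\<And>Z'. Z' |\<in>| lefts Z \<Longrightarrow> right_advantage TB Z'"
  shows "right_advantage TB Z"
  using outcome_plus_right_mono[OF assms(2)] outcome_plus_right_marker[OF assms]
  unfolding right_advantage_def by blast

section \<open>Sums of dyadic tokens\<close>

lemma lefts_half_pow [simp]: "lefts (half_pow k) = {|zero_g|}"
  by (cases k) (simp_all add: one_g_def)

lemma rights_half_pow_0 [simp]: "rights (half_pow 0) = {||}"
  by (simp add: one_g_def)

lemma rights_half_pow_Suc [simp]: "rights (half_pow (Suc k)) = {|half_pow k|}"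
  by simp

lemma lefts_conj_half_pow_0 [simp]: "lefts (conj_g (half_pow 0)) = {||}"
  by (simp add: lefts_conj_g one_g_def)

lemma lefts_conj_half_pow_Suc [simp]: "lefts (conj_g (half_pow (Suc k))) = {|conj_g (half_pow k)|}"
  by (simp add: lefts_conj_g)

lemma rights_conj_half_pow [simp]: "rights (conj_g (half_pow k)) = {|zero_g|}"
  by (simp add: rights_conj_g)

declare half_pow.simps [simp del]

lemma left_advantage_half_pow: "left_advantage TB (half_pow k)"
proof (induction k)
  case 0
  show ?case
    by (rule left_advantageI) simp_all
next
  case (Suc k)
  show ?case
    by (rule left_advantageI) (simp_all add: Suc)
qed

lemma right_advantage_conj_half_pow: "right_advantage TB (conj_g (half_pow k))"
proof (induction k)
  case 0
  show ?case
    by (rule right_advantageI) simp_all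
next
  case (Suc k)
  show ?case
    by (rule right_advantageI) (simp_all add: Suc)
qed

lemma dominates_zero_g: "dominates zero_g zero_g"
  by (rule dominatesI) simp_all

lemma dominates_half_pow_Suc: "dominates (half_pow k) (half_pow (Suc k))"
proof (induction k)
  case 0
  show ?case
    by (rule dominatesI) (simp_all add: dominates_zero_g)
next
  case (Suc k)
  show ?case
    by (rule dominatesI) (simp_all add: dominates_zero_g Suc)
qed

lemma dominates_conj_g: "dominates G H \<Longrightarrow> dominates (conj_g H) (conj_g G)"
proof (induction rule: dominates.induct)
  case (dominatesI H G)
  show ?case
  proof (intro dominates.dominatesI allI impI)
    fix A assume "A |\<in>| lefts (conj_g G)"
    then obtain G' where "G' |\<in>| rights G" "A = conj_g G'"
      by (auto simp: lefts_conj_g)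
    with dominatesI.IH(2) show "\<exists>B. B |\<in>| lefts (conj_g H) \<and> dominates B A"
      by (auto simp: lefts_conj_g)
  next
    fix B assume "B |\<in>| rights (conj_g H)"
    then obtain H' where "H' |\<in>| lefts H" "B = conj_g H'"
      by (auto simp: rights_conj_g)
    with dominatesI.IH(1) show "\<exists>A. A |\<in>| rights (conj_g G) \<and> dominates B A"
      by (auto simp: rights_conj_g)
  qed
qed

datatype token = Pos nat | Neg nat

fun token_game :: "token \<Rightarrow> game" where
  "token_game (Pos k) = half_pow k"
| "token_game (Neg k) = conj_g (half_pow k)"

fun token_neg :: "token \<Rightarrow> token" where
  "token_neg (Pos k) = Neg k"
| "token_neg (Neg k) = Pos k"

fun token_index :: "token \<Rightarrow> nat" where
  "token_index (Pos k) = k"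
| "token_index (Neg k) = k"

fun token_value :: "token \<Rightarrow> rat" where
  "token_value (Pos k) = 1 / 2 ^ k"
| "token_value (Neg k) = - 1 / 2 ^ k"

fun sum_game :: "token list \<Rightarrow> game" where
  "sum_game [] = zero_g"
| "sum_game (t # ts) = plus_g (token_game t) (sum_game ts)"

definition sum_value :: "token list \<Rightarrow> rat" where
  "sum_value ts = (\<Sum>t\<leftarrow>ts. token_value t)"

lemma sum_value_simps [simp]:
  "sum_value [] = 0"
  "sum_value (t # ts) = token_value t + sum_value ts"
  "sum_value (ts @ us) = sum_value ts + sum_value us"
  by (simp_all add: sum_value_def)

lemma token_neg_token_neg [simp]: "token_neg (token_neg t) = t"
  and token_index_token_neg [simp]: "token_index (token_neg t) = token_index t"
  and token_value_token_neg [simp]: "token_value (token_neg t) = - token_value t"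
  and token_game_token_neg: "token_game (token_neg t) = conj_g (token_game t)"
  by (cases t; simp)+

lemma sum_value_map_token_neg [simp]: "sum_value (map token_neg ts) = - sum_value ts"
  by (induction ts) simp_all

lemma size_list_map_token_neg [simp]:
  "size_list token_index (map token_neg ts) = size_list token_index ts"
  by (induction ts) simp_all

lemma sum_game_map_token_neg: "sum_game (map token_neg ts) = conj_g (sum_game ts)"
  by (induction ts) (simp_all add: token_game_token_neg conj_g_plus_g)

lemma sum_game_append: "sum_game (ts @ us) = plus_g (sum_game ts) (sum_game us)"
  by (induction ts) (simp_all add: plus_g_assoc)

inductive left_move :: "token list \<Rightarrow> token list \<Rightarrow> bool" where
  left_move_Pos: "left_move (Pos k # ts) ts"
| left_move_Neg: "left_move (Neg (Suc k) # ts) (Neg k # ts)"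
| left_move_Cons: "left_move ts ts' \<Longrightarrow> left_move (t # ts) (t # ts')"

definition right_move :: "token list \<Rightarrow> token list \<Rightarrow> bool" where
  "right_move ts ts' \<longleftrightarrow> left_move (map token_neg ts) (map token_neg ts')"

lemma left_move_append: "left_move vs vs' \<Longrightarrow> left_move (us @ vs) (us @ vs')"
  by (induction us) (simp_all add: left_move_Cons)

lemma left_move_sum_value_less: "left_move ts ts' \<Longrightarrow> sum_value ts' < sum_value ts"
  by (induction rule: left_move.induct) (simp_all add: field_simps)

lemma right_move_sum_value_less: "right_move ts ts' \<Longrightarrow> sum_value ts < sum_value ts'"
  unfolding right_move_def by (fastforce dest: left_move_sum_value_less)

lemma left_move_size_less:
  "left_move ts ts' \<Longrightarrow> size_list token_index ts' < size_list token_index ts"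
  by (induction rule: left_move.induct) simp_all

lemma right_move_size_less:
  "right_move ts ts' \<Longrightarrow> size_list token_index ts' < size_list token_index ts"
  unfolding right_move_def by (metis left_move_size_less size_list_map_token_neg)

lemma left_move_Cons_iff:
  "left_move (t # ts) us \<longleftrightarrow>
     (\<exists>k. t = Pos k \<and> us = ts) \<or> (\<exists>k. t = Neg (Suc k) \<and> us = Neg k # ts) \<or>
     (\<exists>ts'. left_move ts ts' \<and> us = t # ts')"
  by (auto elim: left_move.cases intro: left_move.intros)

lemma lefts_sum_game:
  "X |\<in>| lefts (sum_game ts) \<longleftrightarrow> (\<exists>ts'. left_move ts ts' \<and> X = sum_game ts')"
proof (induction ts arbitrary: X)
  case Nil
  then show ?case
    by (auto elim: left_move.cases)
next
  case (Cons t ts)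
  have "X |\<in>| lefts (sum_game (t # ts)) \<longleftrightarrow>
    (\<exists>G. G |\<in>| lefts (token_game t) \<and> X = plus_g G (sum_game ts)) \<or>
    (\<exists>ts'. left_move ts ts' \<and> X = sum_game (t # ts'))"
    by (auto simp: mem_lefts_plus_g Cons)
  also have "\<dots> \<longleftrightarrow> (\<exists>us. left_move (t # ts) us \<and> X = sum_game us)"
  proof (cases t)
    case (Pos k)
    then show ?thesis
      by (auto simp: left_move_Cons_iff)
  next
    case (Neg k)
    show ?thesis
    proof (cases k)
      case 0
      with Neg show ?thesis
        by (auto simp: left_move_Cons_iff)
    next
      case (Suc j)
      with Neg show ?thesis
        by (auto simp: left_move_Cons_iff)
    qed
  qed
  finally show ?case .
qed

lemma map_token_neg_map_token_neg [simp]: "map token_neg (map token_neg ts) = ts"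
  by (induction ts) simp_all

lemma rights_sum_game:
  "X |\<in>| rights (sum_game ts) \<longleftrightarrow> (\<exists>ts'. right_move ts ts' \<and> X = sum_game ts')"
proof -
  have "X |\<in>| rights (sum_game ts) \<longleftrightarrow> conj_g X |\<in>| lefts (sum_game (map token_neg ts))"
    by (auto simp: sum_game_map_token_neg lefts_conj_g)
  also have "\<dots> \<longleftrightarrow> (\<exists>us. left_move (map token_neg ts) us \<and> conj_g X = sum_game us)"
    by (rule lefts_sum_game)
  also have "\<dots> \<longleftrightarrow>
    (\<exists>ts'. left_move (map token_neg ts) (map token_neg ts') \<and> conj_g X = sum_game (map token_neg ts'))"
    by (metis map_token_neg_map_token_neg)
  also have "\<dots> \<longleftrightarrow> (\<exists>ts'. right_move ts ts' \<and> X = sum_game ts')"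
    by (simp add: right_move_def sum_game_map_token_neg)
  finally show ?thesis .
qed

lemma token_value_mult_power_in_Ints:
  assumes "token_index t \<le> K"
  shows "token_value t * 2 ^ K \<in> \<int>"
proof -
  have "token_value t * 2 ^ K = (if t = Pos (token_index t) then 1 else - 1) * 2 ^ (K - token_index t)"
    using assms by (cases t) (simp_all add: power_diff)
  then show ?thesis
    by simp
qed

lemma sum_value_mult_power_in_Ints:
  "(\<And>t. t \<in> set ts \<Longrightarrow> token_index t \<le> K) \<Longrightarrow> sum_value ts * 2 ^ K \<in> \<int>"
proof (induction ts)
  case (Cons t ts)
  then show ?case
    by (simp add: distrib_right token_value_mult_power_in_Ints Ints_add)
qed simp

lemma sum_value_ge_inverse_power:
  assumes pos: "0 < sum_value ts" and index_le: "\<And>t. t \<in> set ts \<Longrightarrow> token_index t \<le> K"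
  shows "1 / 2 ^ K \<le> sum_value ts"
proof -
  have "sum_value ts * 2 ^ K \<in> \<int>"
    using index_le by (rule sum_value_mult_power_in_Ints)
  then obtain i where "sum_value ts * 2 ^ K = of_int i"
    by (elim Ints_cases)
  moreover have "0 < sum_value ts * 2 ^ K"
    using pos by simp
  ultimately have "1 \<le> sum_value ts * 2 ^ K"
    by simp
  then show ?thesis
    by (simp add: field_simps)
qed

lemma left_move_remove_Pos:
  assumes "Pos k \<in> set ts"
  shows "\<exists>ts'. left_move ts ts' \<and> sum_value ts' = sum_value ts - 1 / 2 ^ k"
proof -
  from assms obtain us vs where "ts = us @ Pos k # vs"
    by (meson split_list)
  then have "left_move ts (us @ vs) \<and> sum_value (us @ vs) = sum_value ts - 1 / 2 ^ k"
    by (simp add: left_move_append left_move_Pos)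
  then show ?thesis ..
qed

lemma left_move_lower_Neg:
  assumes "Neg (Suc k) \<in> set ts"
  shows "\<exists>ts'. left_move ts ts' \<and> sum_value ts' = sum_value ts - 1 / 2 ^ Suc k"
proof -
  from assms obtain us vs where "ts = us @ Neg (Suc k) # vs"
    by (meson split_list)
  then have "left_move ts (us @ Neg k # vs) \<and>
      sum_value (us @ Neg k # vs) = sum_value ts - 1 / 2 ^ Suc k"
    by (simp add: left_move_append left_move_Neg field_simps)
  then show ?thesis ..
qed

lemma left_move_exists:
  assumes pos: "0 < sum_value ts"
  shows "\<exists>ts'. left_move ts ts' \<and> 0 \<le> sum_value ts'"
proof -
  have "ts \<noteq> []"
    using pos by auto
  define K where "K = Max (token_index ` set ts)"
  have index_le: "token_index t \<le> K" if "t \<in> set ts" for t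
    unfolding K_def using that by (intro Max_ge) auto
  have "K \<in> token_index ` set ts"
    unfolding K_def using \<open>ts \<noteq> []\<close> by (intro Max_in) auto
  \<comment> \<open>All values are multiples of 1/2^K, so lowering the value by 1/2^K keeps it non-negative.\<close>
  have step: "1 / 2 ^ K \<le> sum_value ts"
    using pos index_le by (rule sum_value_ge_inverse_power)
  show ?thesis
  proof (cases "Pos K \<in> set ts")
    case True
    then show ?thesis
      using left_move_remove_Pos step by fastforce
  next
    case False
    from \<open>K \<in> token_index ` set ts\<close> obtain t where "t \<in> set ts" "token_index t = K"
      by blast
    with False have "Neg K \<in> set ts"
      by (cases t) auto
    show ?thesis
    proof (cases K)
      case 0
      have "token_value t \<le> 0" if "t \<in> set ts" for t
        using index_le[OF that] False that 0 by (cases t) auto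
      then have "sum_value ts \<le> 0"
        unfolding sum_value_def by (intro sum_list_nonpos) auto
      with pos show ?thesis
        by simp
    next
      case (Suc j)
      then show ?thesis
        using left_move_lower_Neg \<open>Neg K \<in> set ts\<close> step by fastforce
    qed
  qed
qed

lemma right_move_exists:
  assumes "sum_value ts < 0"
  shows "\<exists>ts'. right_move ts ts' \<and> sum_value ts' \<le> 0"
proof -
  obtain us where "left_move (map token_neg ts) us" "0 \<le> sum_value us"
    using left_move_exists[of "map token_neg ts"] assms by auto
  then have "right_move ts (map token_neg us) \<and> sum_value (map token_neg us) \<le> 0"
    unfolding right_move_def by (simp add: comp_def)
  then show ?thesis
    by blast
qed

theorem outcome_by_sign_sum_game: "outcome_by_sign TB (sum_value ts) (sum_game ts)"
proof (induction ts rule: measure_induct_rule[of "size_list token_index"])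
  case (less ts)
  show ?case
  proof (rule outcome_by_signI)
    fix X assume "X |\<in>| lefts (sum_game ts)"
    then obtain ts' where "left_move ts ts'" "X = sum_game ts'"
      by (auto simp: lefts_sum_game)
    moreover from this have "outcome_by_sign TB (sum_value ts') (sum_game ts')"
      using less left_move_size_less by blast
    ultimately show "\<exists>w<sum_value ts. outcome_by_sign TB w X"
      using left_move_sum_value_less by blast
  next
    fix X assume "X |\<in>| rights (sum_game ts)"
    then obtain ts' where "right_move ts ts'" "X = sum_game ts'"
      by (auto simp: rights_sum_game)
    moreover from this have "outcome_by_sign TB (sum_value ts') (sum_game ts')"
      using less right_move_size_less by blast
    ultimately show "\<exists>w>sum_value ts. outcome_by_sign TB w X"
      using right_move_sum_value_less by blast
  next
    assume "0 < sum_value ts"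
    then obtain ts' where "left_move ts ts'" "0 \<le> sum_value ts'"
      using left_move_exists by blast
    moreover from this have "sum_game ts' |\<in>| lefts (sum_game ts)"
      by (auto simp: lefts_sum_game)
    moreover from calculation have "outcome_by_sign TB (sum_value ts') (sum_game ts')"
      using less left_move_size_less by blast
    ultimately show "\<exists>X (w::rat). X |\<in>| lefts (sum_game ts) \<and> 0 \<le> w \<and> outcome_by_sign TB w X"
      by blast
  next
    assume "sum_value ts < 0"
    then obtain ts' where "right_move ts ts'" "sum_value ts' \<le> 0"
      using right_move_exists by blast
    moreover from this have "sum_game ts' |\<in>| rights (sum_game ts)"
      by (auto simp: rights_sum_game)
    moreover from calculation have "outcome_by_sign TB (sum_value ts') (sum_game ts')"
      using less right_move_size_less by blast
    ultimately show "\<exists>X (w::rat). X |\<in>| rights (sum_game ts) \<and> w \<le> 0 \<and> outcome_by_sign TB w X"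
      by blast
  qed
qed

lemma sum_game_Cons_plus_g:
  "plus_g (sum_game (t # ts)) Y = plus_g (sum_game ts) (plus_g (token_game t) Y)"
  by (simp add: plus_g_assoc plus_g_left_commute)

lemma left_move_outcome_mono:
  "left_move ts ts' \<Longrightarrow> outcome TB (plus_g (sum_game ts') Y) (q, m) \<Longrightarrow>
     outcome TB (plus_g (sum_game ts) Y) (q, m)"
proof (induction arbitrary: Y rule: left_move.induct)
  case (left_move_Pos k ts)
  then show ?case
    using left_advantage_half_pow by (simp add: plus_g_assoc left_advantage_def)
next
  case (left_move_Neg k ts)
  then show ?case
    using dominates_outcome_plus[OF dominates_conj_g[OF dominates_half_pow_Suc]]
    by (simp add: plus_g_assoc)
next
  case (left_move_Cons ts ts' t)
  then show ?case
    by (simp only: sum_game_Cons_plus_g)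
qed

lemma right_move_outcome_mono:
  assumes "right_move ts ts'"
  shows "outcome TB (plus_g (sum_game ts) Y) (q, m) \<Longrightarrow> outcome TB (plus_g (sum_game ts') Y) (q, m)"
proof -
  have "outcome TB (plus_g (sum_game (map token_neg us)) Y) (q, m) \<Longrightarrow>
    outcome TB (plus_g (sum_game (map token_neg us')) Y) (q, m)" if "left_move us us'" for us us'
    using that
  proof (induction arbitrary: Y rule: left_move.induct)
    case (left_move_Pos k ts)
    then show ?case
      using right_advantage_conj_half_pow by (simp add: plus_g_assoc right_advantage_def)
  next
    case (left_move_Neg k ts)
    then show ?case
      using dominates_outcome_plus[OF dominates_half_pow_Suc] by (simp add: plus_g_assoc)
  next
    case (left_move_Cons ts ts' t)
    then show ?case
      by (simp only: list.map sum_game_Cons_plus_g)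
  qed
  with assms show "outcome TB (plus_g (sum_game ts) Y) (q, m) \<Longrightarrow> outcome TB (plus_g (sum_game ts') Y) (q, m)"
    unfolding right_move_def by (metis map_token_neg_map_token_neg)
qed

lemma game_ge_left_move: "left_move ts ts' \<Longrightarrow> game_ge TB (sum_game ts) (sum_game ts')"
  unfolding game_ge_def using left_move_outcome_mono by blast

lemma game_ge_right_move: "right_move ts ts' \<Longrightarrow> game_ge TB (sum_game ts') (sum_game ts)"
  unfolding game_ge_def using right_move_outcome_mono by blast

lemma not_game_ge_sum_game:
  assumes "sum_value us < sum_value ts"
  shows "\<not> game_ge TB (sum_game us) (sum_game ts)"
proof
  let ?X = "sum_game (map token_neg us)"
  assume "game_ge TB (sum_game us) (sum_game ts)"
  moreover have "outcome TB (plus_g (sum_game ts) ?X) (0, True)"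
    using assms outcome_by_sign_sum_game[of TB "ts @ map token_neg us"]
    by (simp add: sum_game_append outcome_by_sign_def)
  ultimately have "outcome TB (plus_g (sum_game us) ?X) (0, True)"
    unfolding game_ge_def by blast
  then show False
    using outcome_by_sign_sum_game[of TB "us @ map token_neg us"]
    by (simp add: sum_game_append outcome_by_sign_def)
qed

theorem is_number_sum_game: "is_number TB (sum_game ts)"
proof (induction ts rule: measure_induct_rule[of "size_list token_index"])
  case (less ts)
  show ?case
  proof (rule is_number.intros[where H = "sum_game ts"])
    show "game_eq TB (sum_game ts) (sum_game ts)"
      by (simp add: game_eq_def game_ge_def)
    show "\<forall>X. X |\<in>| lefts (sum_game ts) \<longrightarrow> is_number TB X"
      using less left_move_size_less by (auto simp: lefts_sum_game)
    show "\<forall>X. X |\<in>| rights (sum_game ts) \<longrightarrow> is_number TB X"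
      using less right_move_size_less by (auto simp: rights_sum_game)
    show "\<forall>X. X |\<in>| lefts (sum_game ts) \<longrightarrow> game_gt TB (sum_game ts) X"
      by (auto simp: lefts_sum_game game_gt_def game_ge_left_move
          intro!: not_game_ge_sum_game left_move_sum_value_less)
    show "\<forall>X. X |\<in>| rights (sum_game ts) \<longrightarrow> game_gt TB X (sum_game ts)"
      by (auto simp: rights_sum_game game_gt_def game_ge_right_move
          intro!: not_game_ge_sum_game right_move_sum_value_less)
  qed
qed

lemma dyadic_eq_sum_game: "\<exists>ts. dyadic n k = sum_game ts"
proof -
  have copies: "copies j (half_pow k) = sum_game (replicate j (Pos k))" for j
    by (induction j) simp_all
  show ?thesis
  proof (cases "0 \<le> n")
    case True
    then show ?thesis
      by (auto simp: dyadic_def copies)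
  next
    case False
    then have "dyadic n k = sum_game (replicate (nat (- n)) (Neg k))"
      by (simp add: dyadic_def copies flip: sum_game_map_token_neg)
    then show ?thesis ..
  qed
qed

theorem mainTheorem19:
  fixes TB :: nat and n :: int and k :: nat
  assumes "1 \<le> k"
  shows "is_number TB (dyadic n k)"
proof -
  obtain ts where "dyadic n k = sum_game ts"
    using dyadic_eq_sum_game by blast
  then show ?thesis
    using is_number_sum_game by simp
qed

end
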